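(* For a right $R$-module $M$ the following are equivalent: (a) $M$ is a finite $\Sigma$-Rickart module; (b) every finitely $M$-generated submodule of any module in $\mathrm{add}(M)$ satisfies the $D_2$ condition.
   Context: Modules are unitary right $R$-modules; $M^{(n)}$ is the direct sum of $n$ copies of $M$. $M$ is Rickart if $\ker\varphi$ is a direct summand of $M$ for all $\varphi\in\mathrm{End}_R(M)$; $M$ is finite $\Sigma$-Rickart if $M^{(n)}$ is Rickart for all $n>0$. $\mathrm{add}(M)$ is the class of modules isomorphic to a direct summand of $M^{(n)}$ for some integer $n>0$. A module $N$ is finitely $M$-generated if there is an epimorphism $M^{(n)}\to N$ for some $n>0$. A module $X$ satisfies the $D_2$ condition if for every submodule $Y\le X$ such that $X/Y$ is isomorphic to a direct summand of $X$, $Y$ is a direct summand of $X$. *)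

theory Defs
  imports "HOL-Algebra.Ring"
begin

text \<open>Right modules over an arbitrary (not necessarily commutative) ring R.
  The module record extends the additive part of the ring record; the fields
  mult and one of the module are unused.\<close>

record ('a, 'b) rmodule = "'b ring" +
  rsmult :: "'b \<Rightarrow> 'a \<Rightarrow> 'b"

definition rmod :: "'a ring \<Rightarrow> ('a, 'b) rmodule \<Rightarrow> bool" where
  "rmod R M \<longleftrightarrow> ring R \<and> abelian_group M \<and>
     (\<forall>x\<in>carrier M. \<forall>r\<in>carrier R. rsmult M x r \<in> carrier M) \<and>
     (\<forall>x\<in>carrier M. \<forall>y\<in>carrier M. \<forall>r\<in>carrier R.
        rsmult M (x \<oplus>\<^bsub>M\<^esub> y) r = rsmult M x r \<oplus>\<^bsub>M\<^esub> rsmult M y r) \<and>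
     (\<forall>x\<in>carrier M. \<forall>r\<in>carrier R. \<forall>s\<in>carrier R.
        rsmult M x (r \<oplus>\<^bsub>R\<^esub> s) = rsmult M x r \<oplus>\<^bsub>M\<^esub> rsmult M x s) \<and>
     (\<forall>x\<in>carrier M. \<forall>r\<in>carrier R. \<forall>s\<in>carrier R.
        rsmult M x (r \<otimes>\<^bsub>R\<^esub> s) = rsmult M (rsmult M x r) s) \<and>
     (\<forall>x\<in>carrier M. rsmult M x \<one>\<^bsub>R\<^esub> = x)"

definition submod :: "'a ring \<Rightarrow> ('a, 'b) rmodule \<Rightarrow> 'b set \<Rightarrow> bool" where
  "submod R M N \<longleftrightarrow> N \<subseteq> carrier M \<and> \<zero>\<^bsub>M\<^esub> \<in> N \<and>
     (\<forall>x\<in>N. \<forall>y\<in>N. x \<oplus>\<^bsub>M\<^esub> y \<in> N) \<and>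
     (\<forall>x\<in>N. \<ominus>\<^bsub>M\<^esub> x \<in> N) \<and>
     (\<forall>x\<in>N. \<forall>r\<in>carrier R. rsmult M x r \<in> N)"

definition direct_summand :: "'a ring \<Rightarrow> ('a, 'b) rmodule \<Rightarrow> 'b set \<Rightarrow> bool" where
  "direct_summand R M K \<longleftrightarrow> submod R M K \<and>
     (\<exists>L. submod R M L \<and> K \<inter> L = {\<zero>\<^bsub>M\<^esub>} \<and>
          {k \<oplus>\<^bsub>M\<^esub> l | k l. k \<in> K \<and> l \<in> L} = carrier M)"

definition rhom :: "'a ring \<Rightarrow> ('a, 'b) rmodule \<Rightarrow> ('a, 'c) rmodule \<Rightarrow> ('b \<Rightarrow> 'c) \<Rightarrow> bool" where
  "rhom R M N f \<longleftrightarrow> f \<in> carrier M \<rightarrow> carrier N \<and>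
     (\<forall>x\<in>carrier M. \<forall>y\<in>carrier M. f (x \<oplus>\<^bsub>M\<^esub> y) = f x \<oplus>\<^bsub>N\<^esub> f y) \<and>
     (\<forall>x\<in>carrier M. \<forall>r\<in>carrier R. f (rsmult M x r) = rsmult N (f x) r)"

definition riso :: "'a ring \<Rightarrow> ('a, 'b) rmodule \<Rightarrow> ('a, 'c) rmodule \<Rightarrow> bool" where
  "riso R M N \<longleftrightarrow> (\<exists>f. rhom R M N f \<and> bij_betw f (carrier M) (carrier N))"

definition rker :: "('a, 'b) rmodule \<Rightarrow> ('a, 'c) rmodule \<Rightarrow> ('b \<Rightarrow> 'c) \<Rightarrow> 'b set" where
  "rker M N f = {x \<in> carrier M. f x = \<zero>\<^bsub>N\<^esub>}"

definition rickart :: "'a ring \<Rightarrow> ('a, 'b) rmodule \<Rightarrow> bool" where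
  "rickart R M \<longleftrightarrow> (\<forall>\<phi>. rhom R M M \<phi> \<longrightarrow> direct_summand R M (rker M M \<phi>))"

text \<open>The direct sum M^(n) of n copies of M, realised as functions on nat
  supported on {0..<n}.\<close>

definition dpow :: "('a, 'b) rmodule \<Rightarrow> nat \<Rightarrow> ('a, nat \<Rightarrow> 'b) rmodule" where
  "dpow M n = \<lparr> carrier = {f. (\<forall>i<n. f i \<in> carrier M) \<and> (\<forall>i\<ge>n. f i = \<zero>\<^bsub>M\<^esub>)},
       mult = (\<lambda>f g i. \<zero>\<^bsub>M\<^esub>), one = (\<lambda>i. \<zero>\<^bsub>M\<^esub>),
       zero = (\<lambda>i. \<zero>\<^bsub>M\<^esub>),
       add = (\<lambda>f g i. f i \<oplus>\<^bsub>M\<^esub> g i),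
       rsmult = (\<lambda>f r i. rsmult M (f i) r) \<rparr>"

definition fin_sigma_rickart :: "'a ring \<Rightarrow> ('a, 'b) rmodule \<Rightarrow> bool" where
  "fin_sigma_rickart R M \<longleftrightarrow> (\<forall>n>0. rickart R (dpow M n))"

definition in_add :: "'a ring \<Rightarrow> ('a, 'b) rmodule \<Rightarrow> ('a, 'c) rmodule \<Rightarrow> bool" where
  "in_add R M X \<longleftrightarrow> (\<exists>n>0. \<exists>K. direct_summand R (dpow M n) K \<and>
                         riso R X ((dpow M n)\<lparr>carrier := K\<rparr>))"

definition fin_Mgen :: "'a ring \<Rightarrow> ('a, 'b) rmodule \<Rightarrow> ('a, 'c) rmodule \<Rightarrow> bool" where
  "fin_Mgen R M N \<longleftrightarrow> (\<exists>n>0. \<exists>f. rhom R (dpow M n) N f \<and> f ` carrier (dpow M n) = carrier N)"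

definition qcoset :: "('a, 'c) rmodule \<Rightarrow> 'c set \<Rightarrow> 'c \<Rightarrow> 'c set" where
  "qcoset X Y x = {x \<oplus>\<^bsub>X\<^esub> y | y. y \<in> Y}"

definition quot :: "('a, 'c) rmodule \<Rightarrow> 'c set \<Rightarrow> ('a, 'c set) rmodule" where
  "quot X Y = \<lparr> carrier = qcoset X Y ` carrier X,
       mult = (\<lambda>A B. Y), one = Y,
       zero = Y,
       add = (\<lambda>A B. {a \<oplus>\<^bsub>X\<^esub> b | a b. a \<in> A \<and> b \<in> B}),
       rsmult = (\<lambda>A r. {rsmult X a r \<oplus>\<^bsub>X\<^esub> y | a y. a \<in> A \<and> y \<in> Y}) \<rparr>"

definition D2 :: "'a ring \<Rightarrow> ('a, 'c) rmodule \<Rightarrow> bool" where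
  "D2 R X \<longleftrightarrow> (\<forall>Y. submod R X Y \<and>
       (\<exists>K. direct_summand R X K \<and> riso R (quot X Y) (X\<lparr>carrier := K\<rparr>))
       \<longrightarrow> direct_summand R X Y)"

text \<open>Condition (b), with the modules of add(M) ranging over carrier type 'c.\<close>

definition add_fg_D2 :: "'a ring \<Rightarrow> ('a, 'b) rmodule \<Rightarrow> 'c itself \<Rightarrow> bool" where
  "add_fg_D2 R M (_ :: 'c itself) \<longleftrightarrow>
     (\<forall>X :: ('a, 'c) rmodule. rmod R X \<and> in_add R M X \<longrightarrow>
        (\<forall>S. submod R X S \<and> fin_Mgen R M (X\<lparr>carrier := S\<rparr>) \<longrightarrow> D2 R (X\<lparr>carrier := S\<rparr>)))"

end

(*
  (a) => (b). Let N <= X be finitely M-generated with X in add(M). Then there are an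
  epimorphism g : M^(k) -> N and a monomorphism iota : N -> M^(k) for one common k. If
  N/Y is isomorphic to a submodule K of N, the isomorphism gives p : N -> K with kernel Y,
  and the kernel of the endomorphism iota o p o g of the Rickart module M^(k) is g^-1(Y).
  That kernel is a direct summand of M^(k), so its image Y under the epimorphism g is a
  direct summand of N.

  (b) => (a). For an endomorphism phi of M^(n), the submodule N = M^(n) (+) Im phi of
  M^(2n) = M^(n) (+) M^(n) is finitely M-generated, and (x, y) |-> (0, phi x) induces
  N / (Ker phi (+) Im phi) ~= 0 (+) Im phi, a direct summand of N. By D2, Ker phi (+) Im phi is
  a direct summand of N; projecting onto the first factor, Ker phi is a direct summand
  of M^(n).
*)

theory Submission
  imports Defs "HOL-Algebra.AbelCoset"
begin

lemma rmod_abelian_group: "rmod R M \<Longrightarrow> abelian_group M"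
  by (simp add: rmod_def)

lemma rmod_smult_closed:
  "rmod R M \<Longrightarrow> x \<in> carrier M \<Longrightarrow> r \<in> carrier R \<Longrightarrow> rsmult M x r \<in> carrier M"
  by (simp add: rmod_def)

lemma rmod_smult_add:
  "rmod R M \<Longrightarrow> x \<in> carrier M \<Longrightarrow> y \<in> carrier M \<Longrightarrow> r \<in> carrier R \<Longrightarrow>
   rsmult M (x \<oplus>\<^bsub>M\<^esub> y) r = rsmult M x r \<oplus>\<^bsub>M\<^esub> rsmult M y r"
  by (simp add: rmod_def)

lemma additive_zero:
  assumes "abelian_group A" "abelian_group B" "f \<in> carrier A \<rightarrow> carrier B"
    and "\<And>x y. x \<in> carrier A \<Longrightarrow> y \<in> carrier A \<Longrightarrow> f (x \<oplus>\<^bsub>A\<^esub> y) = f x \<oplus>\<^bsub>B\<^esub> f y"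
  shows "f \<zero>\<^bsub>A\<^esub> = \<zero>\<^bsub>B\<^esub>"
proof -
  interpret A: abelian_group A by fact
  interpret B: abelian_group B by fact
  have "f \<zero>\<^bsub>A\<^esub> \<oplus>\<^bsub>B\<^esub> f \<zero>\<^bsub>A\<^esub> = f \<zero>\<^bsub>A\<^esub>"
    using assms(4)[of "\<zero>\<^bsub>A\<^esub>" "\<zero>\<^bsub>A\<^esub>"] by simp
  then show ?thesis
    using assms(3) by (simp add: B.add.r_cancel_one' funcset_mem)
qed

lemma additive_minus:
  assumes "abelian_group A" "abelian_group B" "f \<in> carrier A \<rightarrow> carrier B"
    and "\<And>x y. x \<in> carrier A \<Longrightarrow> y \<in> carrier A \<Longrightarrow> f (x \<oplus>\<^bsub>A\<^esub> y) = f x \<oplus>\<^bsub>B\<^esub> f y"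
    and "x \<in> carrier A"
  shows "f (\<ominus>\<^bsub>A\<^esub> x) = \<ominus>\<^bsub>B\<^esub> f x"
proof -
  interpret A: abelian_group A by fact
  interpret B: abelian_group B by fact
  have "f (\<ominus>\<^bsub>A\<^esub> x) \<oplus>\<^bsub>B\<^esub> f x = f \<zero>\<^bsub>A\<^esub>"
    using assms(4)[of "\<ominus>\<^bsub>A\<^esub> x" x] assms(5) by (simp add: A.l_neg)
  also have "\<dots> = \<zero>\<^bsub>B\<^esub>"
    using additive_zero[OF assms(1-4)] .
  finally show ?thesis
    using assms(3,5) by (intro B.minus_equality[symmetric]) auto
qed

lemma rhom_zero:
  "abelian_group A \<Longrightarrow> abelian_group B \<Longrightarrow> rhom R A B f \<Longrightarrow> f \<zero>\<^bsub>A\<^esub> = \<zero>\<^bsub>B\<^esub>"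
  unfolding rhom_def by (rule additive_zero) auto

lemma rhom_minus:
  "abelian_group A \<Longrightarrow> abelian_group B \<Longrightarrow> rhom R A B f \<Longrightarrow> x \<in> carrier A \<Longrightarrow>
   f (\<ominus>\<^bsub>A\<^esub> x) = \<ominus>\<^bsub>B\<^esub> f x"
  unfolding rhom_def by (rule additive_minus) auto

lemma rmod_smult_zero:
  assumes "rmod R M" "r \<in> carrier R"
  shows "rsmult M \<zero>\<^bsub>M\<^esub> r = \<zero>\<^bsub>M\<^esub>"
  using additive_zero[of M M "\<lambda>x. rsmult M x r"] assms
  by (auto simp: rmod_abelian_group rmod_smult_closed rmod_smult_add)

lemma rhomD:
  assumes "rhom R A B f"
  shows "x \<in> carrier A \<Longrightarrow> f x \<in> carrier B"
    and "x \<in> carrier A \<Longrightarrow> y \<in> carrier A \<Longrightarrow> f (x \<oplus>\<^bsub>A\<^esub> y) = f x \<oplus>\<^bsub>B\<^esub> f y"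
    and "x \<in> carrier A \<Longrightarrow> r \<in> carrier R \<Longrightarrow> f (rsmult A x r) = rsmult B (f x) r"
  using assms unfolding rhom_def by blast+

lemma rhom_comp: "rhom R A B f \<Longrightarrow> rhom R B C g \<Longrightarrow> rhom R A C (\<lambda>x. g (f x))"
  unfolding rhom_def Pi_def by auto

lemma rhom_const_zero:
  assumes "rmod R B"
  shows "rhom R A B (\<lambda>x. \<zero>\<^bsub>B\<^esub>)"
proof -
  interpret B: abelian_group B using rmod_abelian_group[OF assms] .
  show ?thesis
    unfolding rhom_def using rmod_smult_zero[OF assms] by simp
qed

lemma rhom_restrict_codomain_iff:
  "S \<subseteq> carrier X \<Longrightarrow> rhom R A (X\<lparr>carrier := S\<rparr>) f \<longleftrightarrow> rhom R A X f \<and> f \<in> carrier A \<rightarrow> S"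
  unfolding rhom_def by auto

lemma rhom_restrict_domain: "rhom R X N f \<Longrightarrow> S \<subseteq> carrier X \<Longrightarrow> rhom R (X\<lparr>carrier := S\<rparr>) N f"
  unfolding rhom_def by (auto simp: subset_iff)

lemma submodD:
  assumes "submod R X Y"
  shows "Y \<subseteq> carrier X" "\<zero>\<^bsub>X\<^esub> \<in> Y" "x \<in> Y \<Longrightarrow> y \<in> Y \<Longrightarrow> x \<oplus>\<^bsub>X\<^esub> y \<in> Y"
    "x \<in> Y \<Longrightarrow> \<ominus>\<^bsub>X\<^esub> x \<in> Y" "x \<in> Y \<Longrightarrow> r \<in> carrier R \<Longrightarrow> rsmult X x r \<in> Y"
  using assms unfolding submod_def by auto

lemma abelian_group_restrict:
  assumes "abelian_group X" "submod R X S"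
  shows "abelian_group (X\<lparr>carrier := S\<rparr>)"
proof -
  interpret X: abelian_group X by fact
  note S = submodD[OF assms(2)]
  show ?thesis
  proof (rule abelian_groupI)
    show "\<exists>y\<in>carrier (X\<lparr>carrier := S\<rparr>). y \<oplus>\<^bsub>X\<lparr>carrier := S\<rparr>\<^esub> x = \<zero>\<^bsub>X\<lparr>carrier := S\<rparr>\<^esub>"
      if "x \<in> carrier (X\<lparr>carrier := S\<rparr>)" for x
      using that S by (intro bexI[of _ "\<ominus>\<^bsub>X\<^esub> x"]) (auto intro: X.l_neg)
  qed (use S in \<open>auto intro: X.a_assoc X.a_comm\<close>)
qed

lemma rmod_restrict:
  assumes "rmod R X" "submod R X S"
  shows "rmod R (X\<lparr>carrier := S\<rparr>)"
  using assms abelian_group_restrict[OF rmod_abelian_group[OF assms(1)] assms(2)] submodD(1,5)[OF assms(2)]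
  unfolding rmod_def by (simp add: subset_iff)

lemma submod_preimage:
  assumes "rmod R A" "rmod R B" "rhom R A B f" "submod R B V"
  shows "submod R A {x \<in> carrier A. f x \<in> V}"
proof -
  interpret A: abelian_group A using rmod_abelian_group[OF assms(1)] .
  interpret B: abelian_group B using rmod_abelian_group[OF assms(2)] .
  show ?thesis
    using submodD[OF assms(4)] rhom_zero[OF A.abelian_group_axioms B.abelian_group_axioms assms(3)]
      rhom_minus[OF A.abelian_group_axioms B.abelian_group_axioms assms(3)]
      rhomD[OF assms(3)] rmod_smult_closed[OF assms(1)]
    unfolding submod_def by auto
qed

lemma submod_image:
  assumes "rmod R A" "rmod R B" "rhom R A B f" "submod R A U"
  shows "submod R B (f ` U)"
proof -
  interpret A: abelian_group A using rmod_abelian_group[OF assms(1)] .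
  interpret B: abelian_group B using rmod_abelian_group[OF assms(2)] .
  note U = submodD[OF assms(4)]
  have "\<zero>\<^bsub>B\<^esub> \<in> f ` U"
    using U(2) rhom_zero[OF A.abelian_group_axioms B.abelian_group_axioms assms(3)] by force
  moreover have "f x \<oplus>\<^bsub>B\<^esub> f y \<in> f ` U" if "x \<in> U" "y \<in> U" for x y
    using that U rhomD(2)[OF assms(3), of x y, symmetric] by blast
  moreover have "\<ominus>\<^bsub>B\<^esub> f x \<in> f ` U" if "x \<in> U" for x
    using that U rhom_minus[OF A.abelian_group_axioms B.abelian_group_axioms assms(3), of x, symmetric] by blast
  moreover have "rsmult B (f x) r \<in> f ` U" if "x \<in> U" "r \<in> carrier R" for x r
    using that U rhomD(3)[OF assms(3), of x r, symmetric] by blast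
  ultimately show ?thesis
    using U(1) rhomD(1)[OF assms(3)] unfolding submod_def by auto
qed

lemma submod_carrier:
  assumes "rmod R X"
  shows "submod R X (carrier X)"
proof -
  interpret X: abelian_group X using rmod_abelian_group[OF assms] .
  show ?thesis
    using rmod_smult_closed[OF assms] unfolding submod_def by simp
qed

lemma submod_zero:
  assumes "rmod R X"
  shows "submod R X {\<zero>\<^bsub>X\<^esub>}"
proof -
  interpret X: abelian_group X using rmod_abelian_group[OF assms] .
  show ?thesis
    using rmod_smult_zero[OF assms] unfolding submod_def by simp
qed

lemma submod_rker:
  "rmod R A \<Longrightarrow> rmod R B \<Longrightarrow> rhom R A B f \<Longrightarrow> submod R A (rker A B f)"
  using submod_preimage[OF _ _ _ submod_zero] unfolding rker_def by fastforce

lemma direct_summandI: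
  assumes X: "rmod R X" and K: "submod R X K" and L: "submod R X L"
    and disjoint: "K \<inter> L \<subseteq> {\<zero>\<^bsub>X\<^esub>}"
    and span: "\<And>x. x \<in> carrier X \<Longrightarrow> \<exists>k\<in>K. \<exists>l\<in>L. x = k \<oplus>\<^bsub>X\<^esub> l"
  shows "direct_summand R X K"
proof -
  interpret X: abelian_group X using rmod_abelian_group[OF X] .
  have "{k \<oplus>\<^bsub>X\<^esub> l | k l. k \<in> K \<and> l \<in> L} = carrier X"
    using span submodD(1)[OF K] submodD(1)[OF L] by blast
  moreover have "K \<inter> L = {\<zero>\<^bsub>X\<^esub>}"
    using disjoint submodD(2)[OF K] submodD(2)[OF L] by blast
  ultimately show ?thesis
    unfolding direct_summand_def using K L by blast
qed

lemma direct_summand_carrier: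
  assumes "rmod R X"
  shows "direct_summand R X (carrier X)"
proof -
  interpret X: abelian_group X using rmod_abelian_group[OF assms] .
  show ?thesis
    by (rule direct_summandI[OF assms submod_carrier[OF assms] submod_zero[OF assms]]) auto
qed

lemma direct_summand_of_preimage:
  assumes P: "rmod R P" and N: "rmod R N" and g: "rhom R P N g" and onto: "g ` carrier P = carrier N"
    and Y: "submod R N Y" and ds: "direct_summand R P {x \<in> carrier P. g x \<in> Y}"
  shows "direct_summand R N Y"
proof -
  obtain C where C: "submod R P C"
    and disjoint: "{x \<in> carrier P. g x \<in> Y} \<inter> C = {\<zero>\<^bsub>P\<^esub>}"
    and span: "{a \<oplus>\<^bsub>P\<^esub> c | a c. a \<in> {x \<in> carrier P. g x \<in> Y} \<and> c \<in> C} = carrier P"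
    using ds unfolding direct_summand_def by blast
  show ?thesis
  proof (rule direct_summandI[OF N Y submod_image[OF P N g C]])
    show "Y \<inter> g ` C \<subseteq> {\<zero>\<^bsub>N\<^esub>}"
    proof
      fix y assume "y \<in> Y \<inter> g ` C"
      then obtain c where "c \<in> C" "g c \<in> Y" "y = g c" by blast
      then have "c = \<zero>\<^bsub>P\<^esub>" using disjoint submodD(1)[OF C] by blast
      then show "y \<in> {\<zero>\<^bsub>N\<^esub>}"
        using \<open>y = g c\<close> rhom_zero[OF rmod_abelian_group[OF P] rmod_abelian_group[OF N] g] by simp
    qed
    fix z assume "z \<in> carrier N"
    then obtain x where "x \<in> carrier P" "z = g x" using onto by blast
    then obtain a c where "a \<in> carrier P" "g a \<in> Y" "c \<in> C" "x = a \<oplus>\<^bsub>P\<^esub> c"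
      using span by blast
    then show "\<exists>y\<in>Y. \<exists>l\<in>g ` C. z = y \<oplus>\<^bsub>N\<^esub> l"
      using \<open>z = g x\<close> rhomD(2)[OF g] submodD(1)[OF C] by blast
  qed
qed

section \<open>Quotient modules\<close>

locale rmod_quot =
  fixes R :: "'a ring" and X :: "('a, 'c) rmodule" (structure) and Y :: "'c set"
  assumes rmod: "rmod R X" and submod: "submod R X Y"
begin

sublocale abelian_subgroup Y X
proof -
  interpret X: abelian_group X using rmod_abelian_group[OF rmod] .
  have "subgroup Y (add_monoid X)"
    using submodD[OF submod] by (intro X.add.subgroupI) auto
  then show "abelian_subgroup Y X"
    by (intro abelian_subgroupI3 additive_subgroupI X.abelian_group_axioms)
qed

lemma qcoset_eq_rcos:
  assumes "x \<in> carrier X"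
  shows "qcoset X Y x = Y +> x"
proof -
  have "qcoset X Y x = x <+ Y"
    unfolding qcoset_def a_l_coset_def' by auto
  then show ?thesis
    using a_coset_eq assms by simp
qed

lemma qcoset_eq_iff:
  assumes "x \<in> carrier X" "z \<in> carrier X"
  shows "qcoset X Y x = qcoset X Y z \<longleftrightarrow> x \<oplus> \<ominus> z \<in> Y"
proof -
  have "Y +> x = Y +> z \<longleftrightarrow> x \<in> Y +> z"
    using assms a_repr_independenceD[of x z] a_repr_independence'[of x z] by auto
  then show ?thesis
    using assms by (simp add: qcoset_eq_rcos a_rcos_module)
qed

lemma qcoset_zero: "qcoset X Y \<zero> = Y"
  using qcoset_eq_rcos a_subset by simp

lemma qcoset_eq_Y_iff: "x \<in> carrier X \<Longrightarrow> qcoset X Y x = Y \<longleftrightarrow> x \<in> Y"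
  using qcoset_eq_rcos a_rcos_const a_rcos_self by metis

lemma carrier_quot: "carrier (quot X Y) = qcoset X Y ` carrier X"
  by (simp add: quot_def)

lemma quot_add_qcoset:
  assumes "x \<in> carrier X" "z \<in> carrier X"
  shows "qcoset X Y x \<oplus>\<^bsub>quot X Y\<^esub> qcoset X Y z = qcoset X Y (x \<oplus> z)"
proof -
  have "A \<oplus>\<^bsub>quot X Y\<^esub> B = A <+> B" for A B
    unfolding quot_def set_add_def' by auto
  then show ?thesis
    using assms by (simp add: qcoset_eq_rcos a_rcos_sum)
qed

lemma quot_smult_qcoset:
  assumes x: "x \<in> carrier X" and r: "r \<in> carrier R"
  shows "rsmult (quot X Y) (qcoset X Y x) r = qcoset X Y (rsmult X x r)"
proof -
  have "rsmult X (x \<oplus> y) r \<oplus> y' \<in> qcoset X Y (rsmult X x r)" if "y \<in> Y" "y' \<in> Y" for y y'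
  proof -
    have "rsmult X (x \<oplus> y) r \<oplus> y' = rsmult X x r \<oplus> (rsmult X y r \<oplus> y')"
      using that x r a_subset rmod_smult_add[OF rmod] rmod_smult_closed[OF rmod] by (auto simp: a_assoc)
    moreover have "rsmult X y r \<oplus> y' \<in> Y"
      using that r submodD(3,5)[OF submod] by blast
    ultimately show ?thesis
      unfolding qcoset_def by blast
  qed
  moreover have "x \<in> qcoset X Y x"
    using x qcoset_eq_rcos a_rcos_self by simp
  ultimately show ?thesis
    unfolding quot_def qcoset_def by auto
qed

lemma riso_quotI:
  assumes N: "abelian_group N" and h: "rhom R X N h" and onto: "h ` carrier X = carrier N"
    and ker: "\<And>x. x \<in> carrier X \<Longrightarrow> h x = \<zero>\<^bsub>N\<^esub> \<longleftrightarrow> x \<in> Y"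
  shows "riso R (quot X Y) N"
proof -
  interpret N: abelian_group N by fact
  have h_eq_iff: "h x = h z \<longleftrightarrow> qcoset X Y x = qcoset X Y z"
    if "x \<in> carrier X" "z \<in> carrier X" for x z
  proof -
    have "h (x \<oplus> \<ominus> z) = h x \<oplus>\<^bsub>N\<^esub> \<ominus>\<^bsub>N\<^esub> h z"
      using that rhomD(2)[OF h] rhom_minus[OF abelian_group_axioms N h] by simp
    then show ?thesis
      using that ker[of "x \<oplus> \<ominus> z"] qcoset_eq_iff rhomD(1)[OF h]
      by (simp add: N.add.inv_solve_right')
  qed
  define \<theta> where "\<theta> A = h (SOME x. x \<in> carrier X \<and> A = qcoset X Y x)" for A
  have \<theta>: "\<theta> (qcoset X Y x) = h x" if "x \<in> carrier X" for x
  proof -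
    have "\<exists>x'. x' \<in> carrier X \<and> qcoset X Y x = qcoset X Y x'"
      using that by blast
    then have "(SOME x'. x' \<in> carrier X \<and> qcoset X Y x = qcoset X Y x') \<in> carrier X \<and>
        qcoset X Y x = qcoset X Y (SOME x'. x' \<in> carrier X \<and> qcoset X Y x = qcoset X Y x')"
      by (rule someI_ex)
    then show ?thesis
      unfolding \<theta>_def using h_eq_iff that by metis
  qed
  have "rhom R (quot X Y) N \<theta>"
    unfolding rhom_def carrier_quot
    using \<theta> rhomD[OF h] quot_add_qcoset quot_smult_qcoset rmod_smult_closed[OF rmod]
    by auto
  moreover have "inj_on \<theta> (carrier (quot X Y))"
    unfolding carrier_quot by (intro inj_onI) (auto simp: \<theta> h_eq_iff)
  moreover have "\<theta> ` carrier (quot X Y) = carrier N"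
    unfolding carrier_quot image_image onto[symmetric] using \<theta> by simp
  ultimately show ?thesis
    unfolding riso_def bij_betw_def by blast
qed

lemma riso_quotE:
  assumes N: "abelian_group N" and iso: "riso R (quot X Y) N"
  obtains h where "rhom R X N h" "h ` carrier X = carrier N"
    "\<And>x. x \<in> carrier X \<Longrightarrow> h x = \<zero>\<^bsub>N\<^esub> \<longleftrightarrow> x \<in> Y"
proof -
  obtain \<theta> where \<theta>: "rhom R (quot X Y) N \<theta>" and bij: "bij_betw \<theta> (carrier (quot X Y)) (carrier N)"
    using iso unfolding riso_def by blast
  define h where "h x = \<theta> (qcoset X Y x)" for x
  have h: "rhom R X N h"
    unfolding rhom_def h_def
    using rhomD[OF \<theta>] carrier_quot quot_add_qcoset quot_smult_qcoset rmod_smult_closed[OF rmod]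
    by (auto simp flip: quot_add_qcoset quot_smult_qcoset)
  have "h x = \<zero>\<^bsub>N\<^esub> \<longleftrightarrow> x \<in> Y" if "x \<in> carrier X" for x
  proof -
    have "h x = \<zero>\<^bsub>N\<^esub> \<longleftrightarrow> h x = h \<zero>"
      using rhom_zero[OF abelian_group_axioms N h] by simp
    also have "\<dots> \<longleftrightarrow> qcoset X Y x = qcoset X Y \<zero>"
      unfolding h_def using bij that by (intro inj_on_eq_iff) (auto simp: bij_betw_def carrier_quot)
    also have "\<dots> \<longleftrightarrow> x \<in> Y"
      using that by (simp add: qcoset_zero qcoset_eq_Y_iff)
    finally show ?thesis .
  qed
  moreover have "h ` carrier X = carrier N"
    using bij unfolding bij_betw_def carrier_quot h_def image_image by simp
  ultimately show thesis
    using that h by blast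
qed

end

section \<open>Finite direct powers\<close>

lemma dpow_carrier: "carrier (dpow M n) = {f. (\<forall>i<n. f i \<in> carrier M) \<and> (\<forall>i\<ge>n. f i = \<zero>\<^bsub>M\<^esub>)}"
  and dpow_add [simp]: "f \<oplus>\<^bsub>dpow M n\<^esub> g = (\<lambda>i. f i \<oplus>\<^bsub>M\<^esub> g i)"
  and dpow_zero: "\<zero>\<^bsub>dpow M n\<^esub> = (\<lambda>i. \<zero>\<^bsub>M\<^esub>)"
  and dpow_smult [simp]: "rsmult (dpow M n) f r = (\<lambda>i. rsmult M (f i) r)"
  by (simp_all add: dpow_def)

lemma dpow_carrier_mem:
  assumes "abelian_group M" "f \<in> carrier (dpow M n)"
  shows "f i \<in> carrier M"
  using assms abelian_monoid.zero_closed[OF abelian_group.axioms(1)[OF assms(1)]]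
  by (cases "i < n") (auto simp: dpow_carrier)

lemma abelian_group_dpow:
  assumes "abelian_group M"
  shows "abelian_group (dpow M n)"
proof -
  interpret M: abelian_group M by fact
  note mem = dpow_carrier_mem[OF assms]
  show ?thesis
  proof (rule abelian_groupI)
    fix f g h assume f: "f \<in> carrier (dpow M n)" and g: "g \<in> carrier (dpow M n)"
      and h: "h \<in> carrier (dpow M n)"
    show "f \<oplus>\<^bsub>dpow M n\<^esub> g \<in> carrier (dpow M n)"
      using f g by (simp add: dpow_carrier)
    show "f \<oplus>\<^bsub>dpow M n\<^esub> g \<oplus>\<^bsub>dpow M n\<^esub> h = f \<oplus>\<^bsub>dpow M n\<^esub> (g \<oplus>\<^bsub>dpow M n\<^esub> h)"
      using mem[OF f] mem[OF g] mem[OF h] by (simp add: M.a_assoc)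
    show "f \<oplus>\<^bsub>dpow M n\<^esub> g = g \<oplus>\<^bsub>dpow M n\<^esub> f"
      using mem[OF f] mem[OF g] by (simp add: M.a_comm)
    show "\<zero>\<^bsub>dpow M n\<^esub> \<oplus>\<^bsub>dpow M n\<^esub> f = f"
      using mem[OF f] by (simp add: dpow_zero)
    show "\<exists>g\<in>carrier (dpow M n). g \<oplus>\<^bsub>dpow M n\<^esub> f = \<zero>\<^bsub>dpow M n\<^esub>"
      using f mem[OF f] by (intro bexI[of _ "\<lambda>i. \<ominus>\<^bsub>M\<^esub> f i"]) (auto simp: dpow_carrier dpow_zero M.l_neg)
  qed (simp add: dpow_carrier dpow_zero)
qed

lemma rmod_dpow:
  assumes "rmod R M"
  shows "rmod R (dpow M n)"
proof -
  note M = assms[unfolded rmod_def]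
  note mem = dpow_carrier_mem[OF rmod_abelian_group[OF assms]]
  show ?thesis
    unfolding rmod_def
  proof (intro conjI ballI)
    fix f g r s assume f: "f \<in> carrier (dpow M n)" and g: "g \<in> carrier (dpow M n)"
      and r: "r \<in> carrier R" and s: "s \<in> carrier R"
    show "rsmult (dpow M n) f r \<in> carrier (dpow M n)"
      using f r M rmod_smult_zero[OF assms r] by (simp add: dpow_carrier)
    show "rsmult (dpow M n) (f \<oplus>\<^bsub>dpow M n\<^esub> g) r =
        rsmult (dpow M n) f r \<oplus>\<^bsub>dpow M n\<^esub> rsmult (dpow M n) g r"
      using mem[OF f] mem[OF g] r M by simp
    show "rsmult (dpow M n) f (r \<oplus>\<^bsub>R\<^esub> s) =
        rsmult (dpow M n) f r \<oplus>\<^bsub>dpow M n\<^esub> rsmult (dpow M n) f s"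
      using mem[OF f] r s M by simp
    show "rsmult (dpow M n) f (r \<otimes>\<^bsub>R\<^esub> s) = rsmult (dpow M n) (rsmult (dpow M n) f r) s"
      using mem[OF f] r s M by simp
  next
    fix f assume f: "f \<in> carrier (dpow M n)"
    show "rsmult (dpow M n) f \<one>\<^bsub>R\<^esub> = f"
      using mem[OF f] M by simp
  qed (use M abelian_group_dpow in auto)
qed

lemma dpow_carrier_mono:
  assumes "abelian_group M" "m \<le> k"
  shows "carrier (dpow M m) \<subseteq> carrier (dpow M k)"
proof
  fix f assume f: "f \<in> carrier (dpow M m)"
  then have "f i \<in> carrier M" "i \<ge> m \<Longrightarrow> f i = \<zero>\<^bsub>M\<^esub>" for i
    using dpow_carrier_mem[OF assms(1) f] by (auto simp: dpow_carrier)
  then show "f \<in> carrier (dpow M k)"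
    using assms(2) by (simp add: dpow_carrier)
qed

lemma rhom_dpow_mono:
  assumes "abelian_group M" "rhom R A (dpow M m) f" "m \<le> k"
  shows "rhom R A (dpow M k) f"
  using assms(2) dpow_carrier_mono[OF assms(1,3)] unfolding rhom_def by (simp add: Pi_iff subset_iff)

lemma in_add_dpow:
  assumes "rmod R M" "n > 0"
  shows "in_add R M (dpow M n)"
proof -
  have "riso R (dpow M n) ((dpow M n)\<lparr>carrier := carrier (dpow M n)\<rparr>)"
    unfolding riso_def rhom_def by (intro exI[of _ "\<lambda>x. x"]) (simp add: bij_betw_def)
  then show ?thesis
    unfolding in_add_def using assms direct_summand_carrier[OF rmod_dpow] by blast
qed

definition trunc :: "('a, 'b) rmodule \<Rightarrow> nat \<Rightarrow> (nat \<Rightarrow> 'b) \<Rightarrow> nat \<Rightarrow> 'b" where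
  "trunc M m f = (\<lambda>i. if i < m then f i else \<zero>\<^bsub>M\<^esub>)"

lemma trunc_id: "f \<in> carrier (dpow M m) \<Longrightarrow> trunc M m f = f"
  by (auto simp: trunc_def dpow_carrier fun_eq_iff)

lemma rhom_trunc:
  assumes "rmod R M" "m \<le> k"
  shows "rhom R (dpow M k) (dpow M m) (trunc M m)"
proof -
  interpret M: abelian_group M using rmod_abelian_group[OF assms(1)] .
  show ?thesis
    unfolding rhom_def using rmod_smult_zero[OF assms(1)] dpow_carrier_mem[OF M.abelian_group_axioms]
    by (auto simp: trunc_def dpow_carrier fun_eq_iff)
qed

lemma trunc_image:
  assumes "abelian_group M" "m \<le> k"
  shows "trunc M m ` carrier (dpow M k) = carrier (dpow M m)"
proof
  show "trunc M m ` carrier (dpow M k) \<subseteq> carrier (dpow M m)"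
    using assms(2) by (auto simp: trunc_def dpow_carrier)
  show "carrier (dpow M m) \<subseteq> trunc M m ` carrier (dpow M k)"
  proof
    fix f assume "f \<in> carrier (dpow M m)"
    then show "f \<in> trunc M m ` carrier (dpow M k)"
      using dpow_carrier_mono[OF assms] trunc_id[of f M m] by (intro image_eqI[of _ _ f]) auto
  qed
qed

section \<open>Finite \<Sigma>-Rickart modules satisfy the D2 condition\<close>

text \<open>The Rickart property is applied to \<open>P \<rightarrow> N \<rightarrow> K \<subseteq> N \<rightarrow> P\<close>, whose kernel is the preimage of \<open>Y\<close>.\<close>

lemma D2_of_rickart_epi_mono:
  assumes P: "rmod R P" and N: "rmod R N" and rickart: "rickart R P"
    and g: "rhom R P N g" and g_onto: "g ` carrier P = carrier N"
    and \<iota>: "rhom R N P \<iota>" and \<iota>_inj: "inj_on \<iota> (carrier N)"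
  shows "D2 R N"
  unfolding D2_def
proof (intro allI impI, elim conjE exE)
  fix Y K assume Y: "submod R N Y" and K: "direct_summand R N K"
    and iso: "riso R (quot N Y) (N\<lparr>carrier := K\<rparr>)"
  interpret q: rmod_quot R N Y using N Y by unfold_locales
  have K_sub: "submod R N K" using K unfolding direct_summand_def by blast
  obtain p where p: "rhom R N (N\<lparr>carrier := K\<rparr>) p"
    and p_ker: "\<And>x. x \<in> carrier N \<Longrightarrow> p x = \<zero>\<^bsub>N\<^esub> \<longleftrightarrow> x \<in> Y"
    using q.riso_quotE[OF rmod_abelian_group[OF rmod_restrict[OF N K_sub]] iso] by auto
  have p_endo: "rhom R N N p"
    using p rhom_restrict_codomain_iff[OF submodD(1)[OF K_sub]] by blast
  define \<psi> where "\<psi> x = \<iota> (p (g x))" for x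
  have \<psi>: "rhom R P P \<psi>"
    unfolding \<psi>_def by (intro rhom_comp[OF rhom_comp[OF g p_endo] \<iota>])
  have "\<psi> x = \<zero>\<^bsub>P\<^esub> \<longleftrightarrow> g x \<in> Y" if "x \<in> carrier P" for x
  proof -
    have "\<psi> x = \<zero>\<^bsub>P\<^esub> \<longleftrightarrow> \<iota> (p (g x)) = \<iota> \<zero>\<^bsub>N\<^esub>"
      unfolding \<psi>_def using rhom_zero[OF rmod_abelian_group[OF N] rmod_abelian_group[OF P] \<iota>] by simp
    also have "\<dots> \<longleftrightarrow> p (g x) = \<zero>\<^bsub>N\<^esub>"
      using that rhomD(1)[OF g] rhomD(1)[OF p_endo] q.zero_closed
      by (intro inj_on_eq_iff[OF \<iota>_inj]) auto
    also have "\<dots> \<longleftrightarrow> g x \<in> Y"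
      using that rhomD(1)[OF g] p_ker by blast
    finally show ?thesis .
  qed
  then have "rker P P \<psi> = {x \<in> carrier P. g x \<in> Y}"
    unfolding rker_def by blast
  then have "direct_summand R P {x \<in> carrier P. g x \<in> Y}"
    using rickart \<psi> unfolding rickart_def by metis
  then show "direct_summand R N Y"
    by (rule direct_summand_of_preimage[OF P N g g_onto Y])
qed

lemma add_fg_D2_of_fin_sigma_rickart:
  fixes R :: "'a ring" and M :: "('a, 'b) rmodule"
  assumes M: "rmod R M" and fsr: "fin_sigma_rickart R M"
  shows "add_fg_D2 R M TYPE('c)"
  unfolding add_fg_D2_def
proof (intro allI impI, elim conjE)
  fix X :: "('a, 'c) rmodule" and S
  assume X: "rmod R X" and X_add: "in_add R M X" and S: "submod R X S"
    and S_gen: "fin_Mgen R M (X\<lparr>carrier := S\<rparr>)"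
  obtain n K \<iota> where n: "n > 0" and K: "direct_summand R (dpow M n) K"
    and \<iota>: "rhom R X ((dpow M n)\<lparr>carrier := K\<rparr>) \<iota>" and \<iota>_bij: "bij_betw \<iota> (carrier X) K"
    using X_add unfolding in_add_def riso_def by auto
  obtain m g where m: "m > 0" and g: "rhom R (dpow M m) (X\<lparr>carrier := S\<rparr>) g"
    and g_onto: "g ` carrier (dpow M m) = S"
    using S_gen unfolding fin_Mgen_def by auto
  define k where "k = max m n"
  have Mk: "rmod R (dpow M k)" and rickart: "rickart R (dpow M k)"
    using rmod_dpow[OF M] fsr m unfolding fin_sigma_rickart_def k_def by auto
  have "rhom R (dpow M k) (X\<lparr>carrier := S\<rparr>) (\<lambda>f. g (trunc M m f))"
    using rhom_comp[OF rhom_trunc[OF M] g] k_def by simp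
  moreover have "(\<lambda>f. g (trunc M m f)) ` carrier (dpow M k) = carrier (X\<lparr>carrier := S\<rparr>)"
  proof -
    have "(\<lambda>f. g (trunc M m f)) ` carrier (dpow M k) = g ` trunc M m ` carrier (dpow M k)"
      by (rule image_image[symmetric])
    then show ?thesis
      using trunc_image[OF rmod_abelian_group[OF M], of m k] g_onto k_def by simp
  qed
  moreover have "rhom R (X\<lparr>carrier := S\<rparr>) (dpow M k) \<iota>"
  proof -
    have "rhom R X (dpow M n) \<iota>"
      using \<iota> rhom_restrict_codomain_iff K unfolding direct_summand_def submod_def by blast
    then have "rhom R X (dpow M k) \<iota>"
      using rhom_dpow_mono[OF rmod_abelian_group[OF M]] k_def by (metis max.cobounded2)
    then show ?thesis
      using rhom_restrict_domain submodD(1)[OF S] by blast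
  qed
  moreover have "inj_on \<iota> (carrier (X\<lparr>carrier := S\<rparr>))"
    using \<iota>_bij submodD(1)[OF S] by (auto simp: bij_betw_def intro: inj_on_subset)
  ultimately show "D2 R (X\<lparr>carrier := S\<rparr>)"
    by (intro D2_of_rickart_epi_mono[OF Mk rmod_restrict[OF X S] rickart])
qed

section \<open>The D2 condition implies finite \<Sigma>-Rickart\<close>

text \<open>\<open>M^(2n)\<close> is split as \<open>M^(n) \<oplus> M^(n)\<close>: \<open>trunc M n\<close> and \<open>upper M n\<close> are the two projections
  and \<open>dpair M n\<close> assembles a pair.\<close>

definition upper :: "('a, 'b) rmodule \<Rightarrow> nat \<Rightarrow> (nat \<Rightarrow> 'b) \<Rightarrow> nat \<Rightarrow> 'b" where
  "upper M n f = (\<lambda>i. if i < n then f (n + i) else \<zero>\<^bsub>M\<^esub>)"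

definition dpair :: "('a, 'b) rmodule \<Rightarrow> nat \<Rightarrow> (nat \<Rightarrow> 'b) \<Rightarrow> (nat \<Rightarrow> 'b) \<Rightarrow> nat \<Rightarrow> 'b" where
  "dpair M n a b = (\<lambda>i. if i < n then a i else b (i - n))"

lemma dpair_carrier:
  "a \<in> carrier (dpow M n) \<Longrightarrow> b \<in> carrier (dpow M n) \<Longrightarrow> dpair M n a b \<in> carrier (dpow M (n + n))"
  by (auto simp: dpair_def dpow_carrier)

lemma trunc_dpair: "a \<in> carrier (dpow M n) \<Longrightarrow> trunc M n (dpair M n a b) = a"
  by (auto simp: trunc_def dpair_def dpow_carrier fun_eq_iff)

lemma upper_dpair: "b \<in> carrier (dpow M n) \<Longrightarrow> upper M n (dpair M n a b) = b"
  by (auto simp: upper_def dpair_def dpow_carrier fun_eq_iff)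

lemma dpair_trunc_upper: "f \<in> carrier (dpow M (n + n)) \<Longrightarrow> dpair M n (trunc M n f) (upper M n f) = f"
  by (auto simp: dpair_def trunc_def upper_def dpow_carrier fun_eq_iff)

lemma dpair_zero: "dpair M n \<zero>\<^bsub>dpow M n\<^esub> \<zero>\<^bsub>dpow M n\<^esub> = \<zero>\<^bsub>dpow M (n + n)\<^esub>"
  by (simp add: dpair_def dpow_zero)

lemma dpair_add:
  "dpair M n (a \<oplus>\<^bsub>dpow M n\<^esub> a') (b \<oplus>\<^bsub>dpow M n\<^esub> b') = dpair M n a b \<oplus>\<^bsub>dpow M (n + n)\<^esub> dpair M n a' b'"
  by (simp add: dpair_def fun_eq_iff)

lemma rhom_upper:
  assumes "rmod R M"
  shows "rhom R (dpow M (n + n)) (dpow M n) (upper M n)"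
proof -
  interpret M: abelian_group M using rmod_abelian_group[OF assms] .
  show ?thesis
    unfolding rhom_def using rmod_smult_zero[OF assms]
    by (auto simp: upper_def dpow_carrier fun_eq_iff)
qed

lemma rhom_dpair:
  assumes "rhom R A (dpow M n) \<alpha>" "rhom R A (dpow M n) \<beta>"
  shows "rhom R A (dpow M (n + n)) (\<lambda>x. dpair M n (\<alpha> x) (\<beta> x))"
proof -
  have "dpair M n (\<alpha> x) (\<beta> x) \<in> carrier (dpow M (n + n))" if "x \<in> carrier A" for x
    using dpair_carrier rhomD(1)[OF assms(1) that] rhomD(1)[OF assms(2) that] by blast
  then show ?thesis
    using rhomD[OF assms(1)] rhomD[OF assms(2)] unfolding rhom_def by (auto simp: dpair_def)
qed

locale dpow_endo =
  fixes R :: "'a ring" and M :: "('a, 'b) rmodule" and n :: nat and \<phi> :: "(nat \<Rightarrow> 'b) \<Rightarrow> nat \<Rightarrow> 'b"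
  assumes rmod: "rmod R M" and endo: "rhom R (dpow M n) (dpow M n) \<phi>"
begin

definition sum_dpow_im :: "(nat \<Rightarrow> 'b) set" where
  "sum_dpow_im = {f \<in> carrier (dpow M (n + n)). upper M n f \<in> \<phi> ` carrier (dpow M n)}"

definition sum_ker_im :: "(nat \<Rightarrow> 'b) set" where
  "sum_ker_im = {f \<in> sum_dpow_im. \<phi> (trunc M n f) = \<zero>\<^bsub>dpow M n\<^esub>}"

definition sum_zero_im :: "(nat \<Rightarrow> 'b) set" where
  "sum_zero_im = {f \<in> sum_dpow_im. trunc M n f = \<zero>\<^bsub>dpow M n\<^esub>}"

abbreviation N :: "('a, nat \<Rightarrow> 'b) rmodule" where
  "N \<equiv> (dpow M (n + n))\<lparr>carrier := sum_dpow_im\<rparr>"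

lemma abelian_group_M: "abelian_group M"
  using rmod_abelian_group[OF rmod] .

lemma zero_in_image: "\<zero>\<^bsub>dpow M n\<^esub> \<in> \<phi> ` carrier (dpow M n)"
proof -
  interpret Mn: abelian_group "dpow M n" using abelian_group_dpow[OF abelian_group_M] .
  show ?thesis
    using rhom_zero[OF Mn.abelian_group_axioms Mn.abelian_group_axioms endo] by force
qed

lemma dpair_in_sum_dpow_im:
  "a \<in> carrier (dpow M n) \<Longrightarrow> b \<in> \<phi> ` carrier (dpow M n) \<Longrightarrow> dpair M n a b \<in> sum_dpow_im"
  unfolding sum_dpow_im_def using dpair_carrier upper_dpair rhomD(1)[OF endo] by blast

lemma submod_sum_dpow_im: "submod R (dpow M (n + n)) sum_dpow_im"
  unfolding sum_dpow_im_def
  using submod_preimage[OF rmod_dpow[OF rmod] rmod_dpow[OF rmod] rhom_upper[OF rmod]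
      submod_image[OF rmod_dpow[OF rmod] rmod_dpow[OF rmod] endo submod_carrier[OF rmod_dpow[OF rmod]]]] .

lemma rmod_N: "rmod R N"
  using rmod_restrict[OF rmod_dpow[OF rmod] submod_sum_dpow_im] .

lemma rhom_trunc_N: "rhom R N (dpow M n) (trunc M n)"
  using rhom_restrict_domain[OF rhom_trunc[OF rmod]] submodD(1)[OF submod_sum_dpow_im] by simp

lemma fin_Mgen_N:
  assumes "0 < n"
  shows "fin_Mgen R M N"
proof -
  define \<gamma> where "\<gamma> f = dpair M n (trunc M n f) (\<phi> (upper M n f))" for f
  have \<gamma>: "rhom R (dpow M (n + n)) (dpow M (n + n)) \<gamma>"
    unfolding \<gamma>_def
    by (intro rhom_dpair rhom_trunc[OF rmod] rhom_comp[OF rhom_upper[OF rmod] endo]) simp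
  have "\<gamma> ` carrier (dpow M (n + n)) \<subseteq> sum_dpow_im"
    unfolding \<gamma>_def using rhomD(1)[OF rhom_trunc[OF rmod, of n "n + n"]] rhomD(1)[OF rhom_upper[OF rmod]]
    by (auto intro!: dpair_in_sum_dpow_im)
  moreover have "sum_dpow_im \<subseteq> \<gamma> ` carrier (dpow M (n + n))"
  proof
    fix f assume "f \<in> sum_dpow_im"
    then obtain x where f: "f \<in> carrier (dpow M (n + n))" and x: "x \<in> carrier (dpow M n)" "upper M n f = \<phi> x"
      unfolding sum_dpow_im_def by blast
    have "trunc M n f \<in> carrier (dpow M n)"
      using rhomD(1)[OF rhom_trunc[OF rmod] f] by simp
    then have "\<gamma> (dpair M n (trunc M n f) x) = f"
      unfolding \<gamma>_def using x f by (simp add: trunc_dpair upper_dpair dpair_trunc_upper flip: x(2))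
    moreover have "dpair M n (trunc M n f) x \<in> carrier (dpow M (n + n))"
      using dpair_carrier \<open>trunc M n f \<in> carrier (dpow M n)\<close> x(1) by blast
    ultimately show "f \<in> \<gamma> ` carrier (dpow M (n + n))"
      by (metis image_eqI)
  qed
  ultimately have onto: "\<gamma> ` carrier (dpow M (n + n)) = sum_dpow_im"
    by blast
  then have "rhom R (dpow M (n + n)) N \<gamma>"
    using \<gamma> rhom_restrict_codomain_iff[OF submodD(1)[OF submod_sum_dpow_im]] by blast
  then show ?thesis
    unfolding fin_Mgen_def using assms onto by (intro exI[of _ "n + n"]) auto
qed

lemma rhom_upper_N: "rhom R N (dpow M n) (upper M n)"
  using rhom_restrict_domain[OF rhom_upper[OF rmod]] submodD(1)[OF submod_sum_dpow_im] by simp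

lemma trunc_in_dpow: "f \<in> sum_dpow_im \<Longrightarrow> trunc M n f \<in> carrier (dpow M n)"
  using rhomD(1)[OF rhom_trunc_N] by simp

lemma upper_in_dpow: "f \<in> sum_dpow_im \<Longrightarrow> upper M n f \<in> carrier (dpow M n)"
  using rhomD(1)[OF rhom_upper_N] by simp

lemma sum_dpow_im_subset: "sum_dpow_im \<subseteq> carrier (dpow M (n + n))"
  unfolding sum_dpow_im_def by blast

lemma sum_zero_im_eq: "sum_zero_im = {f \<in> carrier N. trunc M n f \<in> {\<zero>\<^bsub>dpow M n\<^esub>}}"
  unfolding sum_zero_im_def by simp

lemma sum_ker_im_eq: "sum_ker_im = {f \<in> carrier N. trunc M n f \<in> rker (dpow M n) (dpow M n) \<phi>}"
  unfolding sum_ker_im_def rker_def using trunc_in_dpow by auto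

lemma submod_sum_zero_im: "submod R N sum_zero_im"
  unfolding sum_zero_im_eq
  using submod_preimage[OF rmod_N rmod_dpow[OF rmod] rhom_trunc_N submod_zero[OF rmod_dpow[OF rmod]]] .

lemma submod_sum_ker_im: "submod R N sum_ker_im"
  unfolding sum_ker_im_eq
  using submod_preimage[OF rmod_N rmod_dpow[OF rmod] rhom_trunc_N
      submod_rker[OF rmod_dpow[OF rmod] rmod_dpow[OF rmod] endo]] .

lemma direct_summand_sum_zero_im: "direct_summand R N sum_zero_im"
proof -
  interpret Mn: abelian_group "dpow M n" using abelian_group_dpow[OF abelian_group_M] .
  define L where "L = {f \<in> carrier N. upper M n f \<in> {\<zero>\<^bsub>dpow M n\<^esub>}}"
  have L: "submod R N L"
    unfolding L_def
    using submod_preimage[OF rmod_N rmod_dpow[OF rmod] rhom_upper_N submod_zero[OF rmod_dpow[OF rmod]]] .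
  show ?thesis
  proof (rule direct_summandI[OF rmod_N submod_sum_zero_im L])
    show "sum_zero_im \<inter> L \<subseteq> {\<zero>\<^bsub>N\<^esub>}"
    proof
      fix f assume "f \<in> sum_zero_im \<inter> L"
      then have "f \<in> carrier (dpow M (n + n))" "trunc M n f = \<zero>\<^bsub>dpow M n\<^esub>"
        "upper M n f = \<zero>\<^bsub>dpow M n\<^esub>"
        unfolding sum_zero_im_def L_def using sum_dpow_im_subset by auto
      then have "f = dpair M n \<zero>\<^bsub>dpow M n\<^esub> \<zero>\<^bsub>dpow M n\<^esub>"
        using dpair_trunc_upper by metis
      then show "f \<in> {\<zero>\<^bsub>N\<^esub>}"
        using dpair_zero by simp
    qed
    fix f assume f: "f \<in> carrier N"
    have "dpair M n \<zero>\<^bsub>dpow M n\<^esub> (upper M n f) \<in> sum_dpow_im"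
      using f by (intro dpair_in_sum_dpow_im Mn.zero_closed) (simp add: sum_dpow_im_def)
    then have "dpair M n \<zero>\<^bsub>dpow M n\<^esub> (upper M n f) \<in> sum_zero_im"
      unfolding sum_zero_im_def using trunc_dpair[OF Mn.zero_closed] by blast
    moreover have "dpair M n (trunc M n f) \<zero>\<^bsub>dpow M n\<^esub> \<in> L"
      unfolding L_def using f trunc_in_dpow dpair_in_sum_dpow_im[OF _ zero_in_image]
        upper_dpair[OF Mn.zero_closed] by simp
    moreover have "f = dpair M n \<zero>\<^bsub>dpow M n\<^esub> (upper M n f) \<oplus>\<^bsub>N\<^esub> dpair M n (trunc M n f) \<zero>\<^bsub>dpow M n\<^esub>"
    proof -
      have "f = dpair M n (trunc M n f) (upper M n f)"
        using f sum_dpow_im_subset dpair_trunc_upper[of f M n] by auto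
      also have "\<dots> = dpair M n (\<zero>\<^bsub>dpow M n\<^esub> \<oplus>\<^bsub>dpow M n\<^esub> trunc M n f) (upper M n f \<oplus>\<^bsub>dpow M n\<^esub> \<zero>\<^bsub>dpow M n\<^esub>)"
        using f by (simp add: Mn.l_zero[OF trunc_in_dpow] Mn.r_zero[OF upper_in_dpow] del: dpow_add)
      also have "\<dots> = dpair M n \<zero>\<^bsub>dpow M n\<^esub> (upper M n f) \<oplus>\<^bsub>N\<^esub> dpair M n (trunc M n f) \<zero>\<^bsub>dpow M n\<^esub>"
        by (simp add: dpair_add del: dpow_add)
      finally show ?thesis .
    qed
    ultimately show "\<exists>k\<in>sum_zero_im. \<exists>l\<in>L. f = k \<oplus>\<^bsub>N\<^esub> l"
      by blast
  qed
qed

text \<open>The isomorphism is induced by \<open>(x, y) \<mapsto> (0, \<phi> x)\<close>.\<close>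

lemma riso_quot_sum_ker_im: "riso R (quot N sum_ker_im) (N\<lparr>carrier := sum_zero_im\<rparr>)"
proof -
  interpret Mn: abelian_group "dpow M n" using abelian_group_dpow[OF abelian_group_M] .
  interpret q: rmod_quot R N sum_ker_im using rmod_N submod_sum_ker_im by unfold_locales
  define h where "h f = dpair M n \<zero>\<^bsub>dpow M n\<^esub> (\<phi> (trunc M n f))" for f
  have h: "rhom R N (dpow M (n + n)) h"
    unfolding h_def
    by (intro rhom_dpair rhom_const_zero[OF rmod_dpow[OF rmod]] rhom_comp[OF rhom_trunc_N endo])
  have h_sum_zero_im: "h f \<in> sum_zero_im" if "f \<in> sum_dpow_im" for f
  proof -
    have "h f \<in> sum_dpow_im"
      unfolding h_def using that trunc_in_dpow rhomD(1)[OF endo]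
      by (intro dpair_in_sum_dpow_im Mn.zero_closed) auto
    then show ?thesis
      unfolding sum_zero_im_def h_def using trunc_dpair[OF Mn.zero_closed] by blast
  qed
  have "sum_zero_im \<subseteq> carrier (dpow M (n + n))"
    using submodD(1)[OF submod_sum_zero_im] sum_dpow_im_subset by auto
  then have "rhom R N (N\<lparr>carrier := sum_zero_im\<rparr>) h"
    using h h_sum_zero_im by (simp add: rhom_restrict_codomain_iff Pi_iff)
  moreover have "h ` carrier N = carrier (N\<lparr>carrier := sum_zero_im\<rparr>)"
  proof -
    have "f \<in> h ` sum_dpow_im" if f: "f \<in> sum_zero_im" for f
    proof -
      obtain x where x: "x \<in> carrier (dpow M n)" "upper M n f = \<phi> x"
        using f unfolding sum_zero_im_def sum_dpow_im_def by blast
      have "h (dpair M n x \<zero>\<^bsub>dpow M n\<^esub>) = dpair M n (trunc M n f) (upper M n f)"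
        unfolding h_def using f x trunc_dpair[OF x(1)] unfolding sum_zero_im_def by simp
      also have "\<dots> = f"
        using f sum_dpow_im_subset dpair_trunc_upper unfolding sum_zero_im_def by blast
      finally show ?thesis
        using dpair_in_sum_dpow_im[OF x(1) zero_in_image] by (metis image_eqI)
    qed
    then show ?thesis
      using h_sum_zero_im by auto
  qed
  moreover have "h f = \<zero>\<^bsub>N\<lparr>carrier := sum_zero_im\<rparr>\<^esub> \<longleftrightarrow> f \<in> sum_ker_im" if f: "f \<in> carrier N" for f
  proof -
    have y: "\<phi> (trunc M n f) \<in> carrier (dpow M n)"
      using f rhomD(1)[OF endo trunc_in_dpow] by simp
    have "h f = \<zero>\<^bsub>dpow M (n + n)\<^esub> \<longleftrightarrow> \<phi> (trunc M n f) = \<zero>\<^bsub>dpow M n\<^esub>"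
    proof
      assume "h f = \<zero>\<^bsub>dpow M (n + n)\<^esub>"
      then have "upper M n (h f) = upper M n (dpair M n \<zero>\<^bsub>dpow M n\<^esub> \<zero>\<^bsub>dpow M n\<^esub>)"
        by (simp only: dpair_zero)
      then show "\<phi> (trunc M n f) = \<zero>\<^bsub>dpow M n\<^esub>"
        unfolding h_def by (simp only: upper_dpair[OF y] upper_dpair[OF Mn.zero_closed])
    qed (simp add: h_def dpair_zero)
    then show ?thesis
      using f unfolding sum_ker_im_def by simp
  qed
  ultimately show ?thesis
    by (rule q.riso_quotI[OF rmod_abelian_group[OF rmod_restrict[OF rmod_N submod_sum_zero_im]]])
qed

lemma direct_summand_rker_of_D2:
  assumes "D2 R N"
  shows "direct_summand R (dpow M n) (rker (dpow M n) (dpow M n) \<phi>)"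
proof -
  have "direct_summand R N sum_ker_im"
    using assms submod_sum_ker_im direct_summand_sum_zero_im riso_quot_sum_ker_im
    unfolding D2_def by blast
  moreover have "trunc M n ` carrier N = carrier (dpow M n)"
  proof -
    have "a \<in> trunc M n ` sum_dpow_im" if "a \<in> carrier (dpow M n)" for a
      using dpair_in_sum_dpow_im[OF that zero_in_image] trunc_dpair[OF that] by (metis image_eqI)
    then show ?thesis
      using trunc_in_dpow by auto
  qed
  ultimately show ?thesis
    using direct_summand_of_preimage[OF rmod_N rmod_dpow[OF rmod] rhom_trunc_N _
        submod_rker[OF rmod_dpow[OF rmod] rmod_dpow[OF rmod] endo]]
    unfolding sum_ker_im_eq by blast
qed

end

lemma fin_sigma_rickart_of_add_fg_D2:
  fixes R :: "'a ring" and M :: "('a, 'b) rmodule"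
  assumes M: "rmod R M" and H: "add_fg_D2 R M TYPE(nat \<Rightarrow> 'b)"
  shows "fin_sigma_rickart R M"
  unfolding fin_sigma_rickart_def rickart_def
proof (intro allI impI)
  fix n \<phi> assume n: "0 < n" and \<phi>: "rhom R (dpow M n) (dpow M n) \<phi>"
  interpret dpow_endo R M n \<phi> using M \<phi> by unfold_locales
  have "in_add R M (dpow M (n + n))"
    using in_add_dpow[OF M] n by simp
  then have "\<forall>S. submod R (dpow M (n + n)) S \<and> fin_Mgen R M ((dpow M (n + n))\<lparr>carrier := S\<rparr>) \<longrightarrow>
      D2 R ((dpow M (n + n))\<lparr>carrier := S\<rparr>)"
    using H rmod_dpow[OF M] unfolding add_fg_D2_def by blast
  then have "D2 R N"
    using submod_sum_dpow_im fin_Mgen_N[OF n] by blast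
  then show "direct_summand R (dpow M n) (rker (dpow M n) (dpow M n) \<phi>)"
    by (rule direct_summand_rker_of_D2)
qed

theorem mainTheorem4:
  fixes R :: "'a ring" and M :: "('a, 'b) rmodule"
  assumes "rmod R M"
  shows "(fin_sigma_rickart R M \<longrightarrow> add_fg_D2 R M TYPE('c)) \<and>
         (add_fg_D2 R M TYPE(nat \<Rightarrow> 'b) \<longrightarrow> fin_sigma_rickart R M)"
  using add_fg_D2_of_fin_sigma_rickart[OF assms] fin_sigma_rickart_of_add_fg_D2[OF assms] by blast

end
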